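(* Assume (V1), (V2), (V3), and (In). Then for every $n$, every $i=0,\dots,N_n-2$ and every $t\ge0$, $$t\,y^n_i(t)\,\big[v(y^n_{i+1}(t))-v(y^n_i(t))\big]\le\ell_n.$$
   Context: (V1): $v\in C^1([0,\infty))$ strictly decreasing; (V2): $v(0)=v_{\max}\in\mathbb{R}$; (V3): $\rho\mapsto\rho\,v'(\rho)$ is non-increasing on $[0,\infty)$. $\mathcal{M}_L$: nonnegative compactly supported Radon measures on $\mathbb{R}$ of mass $L>0$. (In): $\bar\rho\in\mathcal{M}_L\cap L^\infty(\mathbb{R})$; $\bar x_{\min}:=\min\mathrm{supp}\,\bar\rho$. For $n\in\mathbb{N}$: $N_n=2^n$, $\ell_n=2^{-n}L$, $\bar x^n_0=\bar x_{\min}$, $\bar x^n_i=\sup\{x:\int_{\bar x^n_{i-1}}^x\bar\rho<\ell_n\}$; $(x^n_i(t))$ solves $\dot x^n_{N_n}=v_{\max}$, $\dot x^n_i=v(\ell_n/(x^n_{i+1}-x^n_i))$, $x^n_i(0)=\bar x^n_i$; $y^n_i(t):=\ell_n/(x^n_{i+1}(t)-x^n_i(t))$, $i=0,\dots,N_n-1$. *)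

theory Defs
  imports "HOL-Analysis.Analysis"
begin

definition initial_datum :: "real \<Rightarrow> (real \<Rightarrow> real) \<Rightarrow> bool" where
  "initial_datum L rho \<longleftrightarrow>
     rho \<in> borel_measurable lborel \<and>
     integrable lborel rho \<and>
     (\<forall>x. 0 \<le> rho x) \<and>
     (\<exists>M. AE x in lborel. rho x \<le> M) \<and>
     (\<exists>R. AE x in lborel. R < \<bar>x\<bar> \<longrightarrow> rho x = 0) \<and>
     integral\<^sup>L lborel rho = L"

definition meas_supp :: "(real \<Rightarrow> real) \<Rightarrow> real set" where
  "meas_supp rho = {x. \<forall>e>0. 0 < (LINT y:{x-e<..<x+e}|lborel. rho y)}"

definition xmin :: "(real \<Rightarrow> real) \<Rightarrow> real" where
  "xmin rho = Inf (meas_supp rho)"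

text \<open>Length of a particle: ell_n = 2^{-n} L; number of particles N_n = 2^n.\<close>
definition ell :: "real \<Rightarrow> nat \<Rightarrow> real" where
  "ell L n = L / 2 ^ n"

fun xbar :: "real \<Rightarrow> (real \<Rightarrow> real) \<Rightarrow> nat \<Rightarrow> nat \<Rightarrow> real" where
  "xbar L rho n 0 = xmin rho"
| "xbar L rho n (Suc i) =
     Sup {x. (LINT y:{xbar L rho n i..x}|lborel. rho y) < ell L n}"

end

theory Submission
  imports Defs
begin

(* Write d_j = x_{j+1} - x_j for the gaps, y_j = l / d_j for the discrete
   densities and G_j = d_j' for the gap velocities.  Since v(y_j)' = e_j G_j / d_j with the
   nonnegative "elasticity" e_j = - y_j v'(y_j), the gap velocity satisfies
       G_j' = A_j - e_j G_j / d_j,   A_j = e_{j+1} G_{j+1} / d_{j+1}  (A_j = 0 for the last gap).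
   An elementary comparison argument for Z = t G - d (whose derivative is t G') shows
   t G_j <= d_j as soon as t A_j <= e_j wherever t G_j > d_j.  For the last gap this is
   trivial; otherwise, where t G_j > d_j we have G_j > 0, hence y_{j+1} < y_j, so (V3) gives
   e_{j+1} <= e_j, and the bound t G_{j+1} <= d_{j+1} for the gap in front closes the step.
   Backward induction from the leader thus gives t G_i <= d_i for all gaps, and
   t y_i (v(y_{i+1}) - v(y_i)) = l (t G_i / d_i) <= l is the claim. *)

lemma nonpos_if_deriv_nonpos_where_pos:
  fixes Z D :: "real \<Rightarrow> real"
  assumes der: "\<And>t. 0 \<le> t \<Longrightarrow> (Z has_real_derivative D t) (at t within {0..})"
    and Z0: "Z 0 \<le> 0"
    and neg: "\<And>t. 0 < t \<Longrightarrow> 0 < Z t \<Longrightarrow> D t \<le> 0"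
    and t: "0 \<le> t"
  shows "Z t \<le> 0"
proof (rule ccontr)
  assume "\<not> Z t \<le> 0"
  hence Zt: "0 < Z t" by simp
  have cont: "continuous_on {0..} Z"
    by (rule DERIV_continuous_on[where D = D]) (simp add: der)
  have der_at: "(Z has_real_derivative D u) (at u)" if "0 < u" for u
    using der[of u] that at_within_interior[of u "{0..}"] by (simp add: interior_real_atLeast)
  txt \<open>The last zero-or-below time s before t; on (s, t] the function is positive.\<close>
  define W where "W = {0..t} \<inter> Z -` {..0}"
  have "continuous_on {0..t} Z" using cont by (rule continuous_on_subset) auto
  hence "closed W" unfolding W_def by (intro continuous_closed_preimage) auto
  moreover have "bounded W" unfolding W_def by (meson bounded_Int bounded_closed_interval)
  ultimately have "compact W" using compact_eq_bounded_closed by blast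
  moreover have "0 \<in> W" using Z0 t unfolding W_def by auto
  ultimately obtain s where sW: "s \<in> W" and smax: "\<And>u. u \<in> W \<Longrightarrow> u \<le> s"
    using compact_attains_sup by (metis empty_iff)
  have s: "0 \<le> s" "s \<le> t" "Z s \<le> 0" using sW unfolding W_def by auto
  have st: "s < t" using s Zt by (cases "s = t") auto
  have pos: "0 < Z u" if "s < u" "u \<le> t" for u
  proof (rule ccontr)
    assume "\<not> 0 < Z u"
    hence "u \<in> W" using that s unfolding W_def by auto
    with smax that show False by fastforce
  qed
  txt \<open>By the mean value theorem Z increases at some point of (s, t) where Z is positive.\<close>
  have "continuous_on {s..t} Z" using cont by (rule continuous_on_subset) (use s in auto)
  then obtain \<xi> where xi: "s < \<xi>" "\<xi> < t" "Z t - Z s = D \<xi> * (t - s)"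
    using mvt[OF st, of Z "\<lambda>x h. D x * h"] der_at s
    by (metis has_field_derivative_def mult.commute le_less_trans linorder_not_le)
  have "D \<xi> \<le> 0" using neg[of \<xi>] pos[of \<xi>] xi s by auto
  hence "D \<xi> * (t - s) \<le> 0" using st by (simp add: mult_nonpos_nonneg)
  with xi s Zt show False by linarith
qed

text \<open>The proof applies the comparison principle to Z = t G - d, whose derivative is t G'.\<close>
lemma time_weighted_rate_le_gap:
  fixes d G A B :: "real \<Rightarrow> real"
  assumes d_deriv: "\<And>t. 0 \<le> t \<Longrightarrow> (d has_real_derivative G t) (at t within {0..})"
    and G_deriv: "\<And>t. 0 \<le> t \<Longrightarrow>
        (G has_real_derivative A t - B t * G t / d t) (at t within {0..})"
    and d_pos: "\<And>t. 0 \<le> t \<Longrightarrow> 0 < d t"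
    and B_nonneg: "\<And>t. 0 < t \<Longrightarrow> 0 \<le> B t"
    and A_bound: "\<And>t. 0 < t \<Longrightarrow> d t < t * G t \<Longrightarrow> t * A t \<le> B t"
    and t: "0 \<le> t"
  shows "t * G t \<le> d t"
proof -
  define D where "D s = s * (A s - B s * G s / d s)" for s
  have "t * G t - d t \<le> 0"
  proof (rule nonpos_if_deriv_nonpos_where_pos[where Z = "\<lambda>s. s * G s - d s" and D = D])
    show "((\<lambda>s. s * G s - d s) has_real_derivative D s) (at s within {0..})" if "0 \<le> s" for s
      using G_deriv[OF that] d_deriv[OF that]
      by (auto intro!: derivative_eq_intros simp: D_def algebra_simps)
    show "0 * G 0 - d 0 \<le> 0" using d_pos[of 0] by simp
    show "D s \<le> 0" if s: "0 < s" "0 < s * G s - d s" for s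
    proof -
      have ds: "0 < d s" using d_pos s by simp
      have "1 \<le> s * G s / d s" using s ds by simp
      hence "B s * 1 \<le> B s * (s * G s / d s)"
        using B_nonneg[OF s(1)] by (intro mult_left_mono) auto
      moreover have "s * A s \<le> B s" using A_bound s by simp
      ultimately show ?thesis by (simp add: D_def algebra_simps)
    qed
  qed (use t in auto)
  thus ?thesis by simp
qed

locale follow_the_leader =
  fixes v v' :: "real \<Rightarrow> real" and vmax l :: real and N :: nat
    and x :: "nat \<Rightarrow> real \<Rightarrow> real"
  assumes v_deriv: "\<And>r. 0 \<le> r \<Longrightarrow> (v has_real_derivative v' r) (at r within {0..})"
    and v_decr: "\<And>a b. 0 \<le> a \<Longrightarrow> a < b \<Longrightarrow> v b < v a"
    and elasticity_mono: "\<And>a b. 0 \<le> a \<Longrightarrow> a \<le> b \<Longrightarrow> b * v' b \<le> a * v' a"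
    and l_pos: "0 < l"
    and leader: "\<And>t. 0 \<le> t \<Longrightarrow> (x N has_real_derivative vmax) (at t within {0..})"
    and follower: "\<And>i t. i < N \<Longrightarrow> 0 \<le> t \<Longrightarrow>
       (x i has_real_derivative v (l / (x (Suc i) t - x i t))) (at t within {0..})"
    and ordered: "\<And>i t. i < N \<Longrightarrow> 0 \<le> t \<Longrightarrow> x i t < x (Suc i) t"
begin

definition gap :: "nat \<Rightarrow> real \<Rightarrow> real" where
  "gap j t = x (Suc j) t - x j t"

definition dens :: "nat \<Rightarrow> real \<Rightarrow> real" where
  "dens j t = l / gap j t"

definition front_speed :: "nat \<Rightarrow> real \<Rightarrow> real" where
  "front_speed j t = (if Suc j < N then v (dens (Suc j) t) else vmax)"

definition gap_rate :: "nat \<Rightarrow> real \<Rightarrow> real" where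
  "gap_rate j t = front_speed j t - v (dens j t)"

definition elast :: "nat \<Rightarrow> real \<Rightarrow> real" where
  "elast j t = - v' (dens j t) * dens j t"

lemma gap_pos: "j < N \<Longrightarrow> 0 \<le> t \<Longrightarrow> 0 < gap j t"
  using ordered by (simp add: gap_def)

lemma dens_pos: "j < N \<Longrightarrow> 0 \<le> t \<Longrightarrow> 0 < dens j t"
  using gap_pos l_pos by (simp add: dens_def)

text \<open>Taking a = 0 in the elasticity monotonicity gives v' \<le> 0, so elasticities are \<ge> 0.\<close>
lemma elast_nonneg: "j < N \<Longrightarrow> 0 \<le> t \<Longrightarrow> 0 \<le> elast j t"
  using elasticity_mono[of 0 "dens j t"] dens_pos[of j t]
  by (simp add: elast_def mult.commute)

lemma elast_mono:
  assumes "j < N" "k < N" "0 \<le> t" "dens k t \<le> dens j t"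
  shows "elast k t \<le> elast j t"
  using elasticity_mono[of "dens k t" "dens j t"] dens_pos[OF assms(2,3)] assms(4)
  by (simp add: elast_def mult.commute)

lemma gap_deriv:
  assumes "j < N" "0 \<le> t"
  shows "(gap j has_real_derivative gap_rate j t) (at t within {0..})"
proof -
  have front: "(x (Suc j) has_real_derivative front_speed j t) (at t within {0..})"
  proof (cases "Suc j < N")
    case True
    then show ?thesis
      using follower[of "Suc j" t] assms by (simp add: front_speed_def dens_def gap_def)
  next
    case False
    then have "Suc j = N" "front_speed j t = vmax"
      using assms by (simp_all add: front_speed_def)
    then show ?thesis using leader[of t] assms by simp
  qed
  have own: "(x j has_real_derivative v (dens j t)) (at t within {0..})"
    using follower[of j t] assms by (simp add: dens_def gap_def)
  show ?thesis unfolding gap_def[abs_def] gap_rate_def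
    using front own by (auto intro!: derivative_eq_intros)
qed

text \<open>Chain rule: v(y_j)' = v'(y_j) y_j' with y_j' = - y_j G_j / d_j.\<close>
lemma v_dens_deriv:
  assumes "j < N" "0 \<le> t"
  shows "((\<lambda>s. v (dens j s)) has_real_derivative elast j t * gap_rate j t / gap j t)
           (at t within {0..})"
proof -
  have "(v has_real_derivative v' (dens j t)) (at (dens j t))"
    using v_deriv[of "dens j t"] dens_pos[OF assms] at_within_interior[of "dens j t" "{0..}"]
    by (simp add: interior_real_atLeast)
  moreover have "(dens j has_real_derivative - dens j t * gap_rate j t / gap j t) (at t within {0..})"
    unfolding dens_def[abs_def] using gap_deriv[OF assms] gap_pos[OF assms]
    by (auto intro!: derivative_eq_intros simp: power2_eq_square field_simps)
  ultimately have "((\<lambda>s. v (dens j s)) has_real_derivative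
      v' (dens j t) * (- dens j t * gap_rate j t / gap j t)) (at t within {0..})"
    by (rule DERIV_chain2)
  then show ?thesis by (simp add: elast_def mult.assoc)
qed

definition push :: "nat \<Rightarrow> real \<Rightarrow> real" where
  "push j t = (if Suc j < N then elast (Suc j) t * gap_rate (Suc j) t / gap (Suc j) t else 0)"

lemma gap_rate_deriv:
  assumes "j < N" "0 \<le> t"
  shows "(gap_rate j has_real_derivative push j t - elast j t * gap_rate j t / gap j t)
           (at t within {0..})"
proof (cases "Suc j < N")
  case True
  have "gap_rate j = (\<lambda>s. v (dens (Suc j) s) - v (dens j s))"
    by (rule ext) (simp add: gap_rate_def front_speed_def True)
  then show ?thesis
    using True v_dens_deriv[OF assms] v_dens_deriv[OF True assms(2)]
    by (auto intro!: derivative_eq_intros simp: push_def)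
next
  case False
  have "gap_rate j = (\<lambda>s. vmax - v (dens j s))"
    by (rule ext) (simp add: gap_rate_def front_speed_def False)
  then show ?thesis
    using False v_dens_deriv[OF assms]
    by (auto intro!: derivative_eq_intros simp: push_def)
qed

text \<open>Where t G_j exceeds d_j, particle j is slower than its front particle, so gap j is
  denser than gap j + 1 and has the larger elasticity; together with the bound for the gap
  in front this controls the push term.\<close>
lemma push_bound:
  assumes j: "j < N" and s: "0 < s" "gap j s < s * gap_rate j s"
    and front: "Suc j < N \<Longrightarrow> s * gap_rate (Suc j) s \<le> gap (Suc j) s"
  shows "s * push j s \<le> elast j s"
proof (cases "Suc j < N")
  case True
  have "0 < s * gap_rate j s" using s gap_pos[OF j, of s] by linarith
  hence "0 < gap_rate j s" using s by (simp add: zero_less_mult_iff)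
  hence "v (dens j s) < v (dens (Suc j) s)" using True by (simp add: gap_rate_def front_speed_def)
  hence "dens (Suc j) s \<le> dens j s"
    using v_decr[of "dens j s" "dens (Suc j) s"] dens_pos[OF j, of s] s by fastforce
  hence e: "elast (Suc j) s \<le> elast j s" using elast_mono True j s by simp
  have g: "0 < gap (Suc j) s" using gap_pos True s by simp
  have "s * gap_rate (Suc j) s / gap (Suc j) s \<le> 1" using front True g by simp
  hence "elast (Suc j) s * (s * gap_rate (Suc j) s / gap (Suc j) s) \<le> elast (Suc j) s * 1"
    using elast_nonneg[OF True, of s] s by (intro mult_left_mono) auto
  moreover have "s * push j s = elast (Suc j) s * (s * gap_rate (Suc j) s / gap (Suc j) s)"
    by (simp add: push_def True)
  ultimately show ?thesis using e by linarith
next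
  case False
  then show ?thesis using elast_nonneg[OF j, of s] s by (simp add: push_def)
qed

lemma gap_rate_bound_step:
  assumes j: "j < N"
    and front: "Suc j < N \<Longrightarrow> \<forall>t\<ge>0. t * gap_rate (Suc j) t \<le> gap (Suc j) t"
  shows "\<forall>t\<ge>0. t * gap_rate j t \<le> gap j t"
proof (intro allI impI)
  fix t :: real assume t: "0 \<le> t"
  show "t * gap_rate j t \<le> gap j t"
  proof (rule time_weighted_rate_le_gap[where A = "push j" and B = "elast j"])
    show "(gap j has_real_derivative gap_rate j s) (at s within {0..})" if "0 \<le> s" for s
      using gap_deriv[OF j that] .
    show "(gap_rate j has_real_derivative push j s - elast j s * gap_rate j s / gap j s)
        (at s within {0..})" if "0 \<le> s" for s
      using gap_rate_deriv[OF j that] .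
    show "0 < gap j s" if "0 \<le> s" for s
      using gap_pos[OF j that] .
    show "0 \<le> elast j s" if "0 < s" for s
      using elast_nonneg[OF j] that by simp
    show "s * push j s \<le> elast j s" if "0 < s" "gap j s < s * gap_rate j s" for s
      using push_bound[OF j that] front that by simp
  qed (rule t)
qed

lemma gap_rate_bound:
  assumes "j < N" "0 \<le> t"
  shows "t * gap_rate j t \<le> gap j t"
proof -
  have "j \<le> N - 1" using assms by simp
  then have "\<forall>t\<ge>0. t * gap_rate j t \<le> gap j t"
  proof (induction j rule: inc_induct)
    case base
    show ?case using assms gap_rate_bound_step[of "N - 1"] by simp
  next
    case (step m)
    show ?case using assms step gap_rate_bound_step[of m] by simp
  qed
  with assms show ?thesis by simp
qed

text \<open>The density-weighted velocity difference is l times t G_i / d_i, hence at most l.\<close>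
theorem density_velocity_bound:
  assumes "Suc i < N" "0 \<le> t"
  shows "t * dens i t * (v (dens (Suc i) t) - v (dens i t)) \<le> l"
proof -
  have i: "i < N" using assms by simp
  have "t * dens i t * (v (dens (Suc i) t) - v (dens i t)) = l * (t * gap_rate i t / gap i t)"
    using assms by (simp add: gap_rate_def front_speed_def dens_def)
  also have "\<dots> \<le> l * 1"
    using gap_rate_bound[OF i assms(2)] gap_pos[OF i assms(2)] l_pos
    by (intro mult_left_mono) auto
  finally show ?thesis by simp
qed

end

theorem lemma3p9:
  fixes v v' :: "real \<Rightarrow> real" and vmax L :: real and rho :: "real \<Rightarrow> real"
    and n :: nat and x :: "nat \<Rightarrow> real \<Rightarrow> real"
  assumes V1_deriv: "\<And>r. 0 \<le> r \<Longrightarrow> (v has_real_derivative v' r) (at r within {0..})"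
    and V1_cont: "continuous_on {0..} v'"
    and V1_decr: "\<And>a b. 0 \<le> a \<Longrightarrow> a < b \<Longrightarrow> v b < v a"
    and V2: "v 0 = vmax"
    and V3: "\<And>a b. 0 \<le> a \<Longrightarrow> a \<le> b \<Longrightarrow> b * v' b \<le> a * v' a"
    and L_pos: "0 < L"
    and In: "initial_datum L rho"
    and init: "\<And>i. i \<le> 2 ^ n \<Longrightarrow> x i 0 = xbar L rho n i"
    and ode_leader: "\<And>t. 0 \<le> t \<Longrightarrow> (x (2 ^ n) has_real_derivative vmax) (at t within {0..})"
    and ode: "\<And>i t. i < 2 ^ n \<Longrightarrow> 0 \<le> t \<Longrightarrow>
       (x i has_real_derivative v (ell L n / (x (Suc i) t - x i t))) (at t within {0..})"
    and ordered: "\<And>i t. i < 2 ^ n \<Longrightarrow> 0 \<le> t \<Longrightarrow> x i t < x (Suc i) t"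
  shows "\<forall>i t. Suc i < 2 ^ n \<longrightarrow> 0 \<le> t \<longrightarrow>
     (let y = (\<lambda>j. ell L n / (x (Suc j) t - x j t)) in
       t * y i * (v (y (Suc i)) - v (y i)) \<le> ell L n)"
proof -
  have l_pos: "0 < ell L n" using L_pos by (simp add: ell_def)
  interpret chain: follow_the_leader v v' vmax "ell L n" "2 ^ n" x
    by unfold_locales (fact V1_deriv V1_decr V3 l_pos ode_leader ode ordered)+
  show ?thesis
  proof (intro allI impI)
    fix i and t :: real
    assume "Suc i < 2 ^ n" "0 \<le> t"
    then show "let y = (\<lambda>j. ell L n / (x (Suc j) t - x j t)) in
        t * y i * (v (y (Suc i)) - v (y i)) \<le> ell L n"
      using chain.density_velocity_bound[of i t]
      unfolding Let_def chain.dens_def chain.gap_def by blast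
  qed
qed

end
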